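(* There are absolute constants $c>0$ and $C>0$ such that the following holds. Let $N\ge2$ and let $f(s)=\sum_{n=1}^Na_nn^{-s}$ be a Dirichlet polynomial with complex coefficients. If $k\ge cN/\log N$ (more precisely, whenever $k\ge\pi(N)$), then \[\|f\|_\infty\le C\|f\|_{2k},\] where $\|f\|_q=\big(\lim_{T\to\infty}\frac1T\int_0^T|f(it)|^q\,dt\big)^{1/q}$ for $0<q<\infty$ and $\|f\|_\infty=\sup_{t\in\mathbb{R}}|f(it)|$.
   Context: $\pi(N)$ denotes the number of primes $\le N$. The paper states the result as: if $k\gg N/\log N$ then $\|f\|_\infty\ll\|f\|_{2k}$; its argument gives the bound for all real $k\ge\pi(N)$ with constant $C=4\pi^2e$. *)

theory Defs
  imports "HOL-Analysis.Analysis" "HOL-Computational_Algebra.Primes"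
begin

text \<open>The Dirichlet polynomial f(s) = sum_{n=1}^N a_n n^(-s), evaluated on the
  imaginary axis s = i t:  f(i t) = sum_{n=1}^N a_n exp(- i t ln n).\<close>
definition dirichlet_poly_it :: "(nat \<Rightarrow> complex) \<Rightarrow> nat \<Rightarrow> real \<Rightarrow> complex" where
  "dirichlet_poly_it a N t = (\<Sum>n=1..N. a n * exp (- \<i> * complex_of_real (t * ln (real n))))"

definition dp_norm :: "real \<Rightarrow> (nat \<Rightarrow> complex) \<Rightarrow> nat \<Rightarrow> real" where
  "dp_norm q a N =
     (Lim at_top (\<lambda>T::real. (1 / T) * integral {0..T}
        (\<lambda>t. cmod (dirichlet_poly_it a N t) powr q))) powr (1 / q)"

definition dp_sup_norm :: "(nat \<Rightarrow> complex) \<Rightarrow> nat \<Rightarrow> real" where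
  "dp_sup_norm a N = (SUP t::real. cmod (dirichlet_poly_it a N t))"

definition prime_pi :: "nat \<Rightarrow> nat" where
  "prime_pi N = card {p::nat. prime p \<and> p \<le> N}"

end

theory Submission
  imports Defs
begin

(*
  For an integer j, the power f^j of f(it) = sum_{n <= N} a_n n^(-it) is again a Dirichlet
  polynomial, supported on products of j integers <= N, that is, on N-smooth integers m <= N^j.
  Cauchy-Schwarz and Parseval's identity for mean values give
  |f(it)|^(2j) <= #{N-smooth m <= N^j} * ||f||_(2j)^(2j), and Rankin's trick (with exponent
  1 / log N) bounds this count by e^(259 j) as soon as j >= pi(N); here Chebyshev's lower bound
  pi(N) >= N / (8 log N) pays for the small primes. For j = floor k, concavity of x^(j/k)
  (Jensen's inequality for mean values) gives ||f||_(2j) <= ||f||_(2k), hence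
  ||f||_inf <= e^(259/2) ||f||_(2k). Chebyshev's upper bound pi(N) <= 8 N / log N turns the
  hypothesis k >= 8 N / log N into k >= pi(N). The mean value defining ||f||_q exists: for
  q = 2j by Parseval, in general by approximating x^(q/2) uniformly by polynomials.
*)

section \<open>Chebyshev bounds for the prime counting function\<close>

lemma prod_primes_dvd:
  fixes A :: "nat set"
  assumes "finite A" "\<And>p. p \<in> A \<Longrightarrow> prime p" "\<And>p. p \<in> A \<Longrightarrow> p dvd x"
  shows "\<Prod>A dvd x"
  using assms
proof (induction A rule: finite_induct)
  case (insert p A)
  then have "coprime p (\<Prod>A)"
    by (intro prod_coprime_right primes_coprime) auto
  with insert show ?case
    by (simp add: divides_mult)
qed simp

lemma binomial_odd_central_le: "(2*m+1 choose m) \<le> 4^m"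
proof -
  have "2 * (2*m+1 choose m) = (2*m+1 choose m) + (2*m+1 choose (m+1))"
    using binomial_symmetric[of m "2*m+1"] by simp
  also have "\<dots> = (\<Sum>k\<in>{m,m+1}. 2*m+1 choose k)"
    by simp
  also have "\<dots> \<le> (\<Sum>k\<le>2*m+1. 2*m+1 choose k)"
    by (intro sum_mono2) auto
  also have "\<dots> = 2^(2*m+1)"
    by (rule choose_row_sum)
  finally show ?thesis
    by (simp add: power_mult)
qed

lemma prod_primes_between_dvd_binomial:
  "\<Prod>{p. prime p \<and> m+1 < p \<and> p \<le> 2*m+1} dvd (2*m+1 choose m)"
proof (rule prod_primes_dvd)
  fix p assume p: "p \<in> {p. prime p \<and> m+1 < p \<and> p \<le> 2*m+1}"
  then have "prime p"
    by simp
  have "fact (2*m+1) = fact m * fact (m+1) * (2*m+1 choose m)"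
    using binomial_fact_lemma[of m "2*m+1"] by (simp add: Suc_diff_le)
  moreover have "p dvd fact (2*m+1)" "\<not> p dvd fact m" "\<not> p dvd fact (m+1)"
    using p prime_dvd_fact_iff[OF \<open>prime p\<close>] by (simp_all del: fact_Suc)
  ultimately show "p dvd (2*m+1 choose m)"
    using \<open>prime p\<close> by (metis prime_dvd_mult_iff)
qed auto

lemma primorial_odd_le:
  "\<Prod>{p::nat. prime p \<and> p \<le> 2*m+1} \<le> \<Prod>{p. prime p \<and> p \<le> m+1} * 4^m"
proof -
  let ?A = "{p. prime p \<and> p \<le> m+1}" and ?B = "{p. prime p \<and> m+1 < p \<and> p \<le> 2*m+1}"
  have "{p. prime p \<and> p \<le> 2*m+1} = ?A \<union> ?B"
    by auto
  then have "\<Prod>{p. prime p \<and> p \<le> 2*m+1} = \<Prod>?A * \<Prod>?B"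
    by (simp add: prod.union_disjoint disjoint_iff)
  also have "\<Prod>?B \<le> (2*m+1 choose m)"
    by (intro dvd_imp_le prod_primes_between_dvd_binomial) simp
  also have "\<dots> \<le> 4^m"
    by (rule binomial_odd_central_le)
  finally show ?thesis
    by simp
qed

lemma primorial_le: "\<Prod>{p::nat. prime p \<and> p \<le> n} \<le> 4^n"
proof (induction n rule: less_induct)
  case (less n)
  consider "n \<le> 2" | "n > 2" "even n" | m where "n = 2*m+1" "m \<ge> 1"
    by (cases "n \<le> 2"; cases "even n") (auto elim!: oddE)
  then show ?case
  proof cases
    case 1
    then have "{p::nat. prime p \<and> p \<le> n} = (if n = 2 then {2} else {})"
      by (auto dest: prime_gt_1_nat)
    then show ?thesis
      by simp
  next
    case 2
    then have "\<not> prime n"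
      using prime_odd_nat by blast
    then have "prime p \<Longrightarrow> p \<le> n \<longleftrightarrow> p \<le> n - 1" for p
      using 2 by (cases "p = n") auto
    then have "{p. prime p \<and> p \<le> n} = {p. prime p \<and> p \<le> n - 1}"
      by blast
    also have "\<Prod>\<dots> \<le> 4^(n - 1)"
      using less[of "n - 1"] 2 by simp
    also have "\<dots> \<le> 4^n"
      by (rule power_increasing) auto
    finally show ?thesis .
  next
    case 3
    have "\<Prod>{p. prime p \<and> p \<le> n} \<le> \<Prod>{p. prime p \<and> p \<le> m+1} * 4^m"
      unfolding 3 by (rule primorial_odd_le)
    also have "\<dots> \<le> 4^(m+1) * 4^m"
      using less[of "m+1"] 3 by simp
    also have "\<dots> = 4^n"
      using 3 by (simp flip: power_add)
    finally show ?thesis .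
  qed
qed

lemma ln_le_2_sqrt: "x > 0 \<Longrightarrow> ln x \<le> 2 * sqrt x"
  using ln_le_minus_one[of "sqrt x"] by (simp add: ln_sqrt)

lemma card_primes_le_sqrt: "real (card {p::nat. prime p \<and> p * p \<le> N}) \<le> sqrt (real N)"
proof -
  have "{p::nat. prime p \<and> p * p \<le> N} \<subseteq> {1..nat \<lfloor>sqrt (real N)\<rfloor>}"
  proof
    fix p assume p: "p \<in> {p::nat. prime p \<and> p * p \<le> N}"
    then have "real p ^ 2 \<le> real N"
      by (simp add: power2_eq_square flip: of_nat_mult)
    then have "real p \<le> sqrt (real N)"
      by (simp add: real_le_rsqrt)
    with p show "p \<in> {1..nat \<lfloor>sqrt (real N)\<rfloor>}"
      by (auto simp: le_nat_floor le_floor_iff Suc_leI prime_gt_0_nat)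
  qed
  then have "card {p::nat. prime p \<and> p * p \<le> N} \<le> nat \<lfloor>sqrt (real N)\<rfloor>"
    using card_mono[of "{1..nat \<lfloor>sqrt (real N)\<rfloor>}"] by fastforce
  then have "real (card {p::nat. prime p \<and> p * p \<le> N}) \<le> real (nat \<lfloor>sqrt (real N)\<rfloor>)"
    by (simp only: of_nat_le_iff)
  also have "\<dots> \<le> sqrt (real N)"
    by simp
  finally show ?thesis .
qed

lemma card_large_primes_le:
  assumes "N \<ge> 2"
  shows "real (card {p::nat. prime p \<and> p \<le> N \<and> N < p * p}) \<le> 6 * real N / ln (real N)"
proof -
  let ?P = "{p::nat. prime p \<and> p \<le> N}" and ?Q = "{p::nat. prime p \<and> p \<le> N \<and> N < p * p}"
  have "ln (real N) / 2 \<le> ln (real p)" if "p \<in> ?Q" for p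
  proof -
    have "p > 0"
      using that by (simp add: prime_gt_0_nat)
    have "real N < real p ^ 2"
      using that by (simp add: power2_eq_square flip: of_nat_mult)
    then have "ln (real N) < ln (real p ^ 2)"
      using assms \<open>p > 0\<close> by (intro ln_less_cancel_iff[THEN iffD2]) auto
    then show ?thesis
      using \<open>p > 0\<close> by (simp add: ln_realpow)
  qed
  then have "real (card ?Q) * (ln (real N) / 2) \<le> (\<Sum>p\<in>?Q. ln (real p))"
    using sum_mono[of ?Q "\<lambda>_. ln (real N) / 2"] by simp
  also have "\<dots> \<le> (\<Sum>p\<in>?P. ln (real p))"
    by (intro sum_mono2) (auto dest: prime_gt_0_nat)
  also have "\<dots> = ln (\<Prod>p\<in>?P. real p)"
    by (subst ln_prod) (auto dest: prime_gt_0_nat)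
  also have "(\<Prod>p\<in>?P. real p) = real (\<Prod>?P)"
    by simp
  also have "ln \<dots> \<le> ln (4 ^ N)"
  proof (rule ln_mono)
    show "real (\<Prod>?P) \<le> 4 ^ N"
      using primorial_le[of N] by (metis of_nat_le_iff of_nat_numeral of_nat_power)
  qed (auto intro!: prod_pos dest: prime_gt_0_nat)
  also have "\<dots> \<le> real N * 3"
    using ln_le_minus_one[of 4] by (simp add: ln_realpow mult_left_mono)
  finally show ?thesis
    using assms by (simp add: field_simps)
qed

lemma prime_pi_eq_card_small_add_card_large:
  "prime_pi N = card {p. prime p \<and> p * p \<le> N} + card {p. prime p \<and> p \<le> N \<and> N < p * p}"
proof -
  have "{p. prime p \<and> p \<le> N} = {p. prime p \<and> p * p \<le> N} \<union> {p. prime p \<and> p \<le> N \<and> N < p * p}"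
    by (auto intro: order_trans[OF le_square])
  moreover have "finite {p::nat. prime p \<and> p * p \<le> N}"
    by (rule finite_subset[of _ "{..N}"]) (auto intro: order_trans[OF le_square])
  ultimately show ?thesis
    unfolding prime_pi_def by (subst card_Un_disjoint[symmetric]) auto
qed

lemma prime_pi_upper:
  assumes "N \<ge> 2"
  shows "real (prime_pi N) \<le> 8 * real N / ln (real N)"
proof -
  have "sqrt (real N) * ln (real N) \<le> sqrt (real N) * (2 * sqrt (real N))"
    using ln_le_2_sqrt[of "real N"] assms by (intro mult_left_mono) auto
  also have "\<dots> = 2 * real N"
    by simp
  finally have "sqrt (real N) \<le> 2 * real N / ln (real N)"
    using assms by (simp add: field_simps)
  then show ?thesis
    using card_primes_le_sqrt[of N] card_large_primes_le[OF assms]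
    unfolding prime_pi_eq_card_small_add_card_large by simp
qed

lemma prime_power_gt_exponent:
  assumes "prime (p::nat)"
  shows "n < p ^ n"
proof -
  have "n < 2 ^ n"
    by (rule less_exp)
  also have "\<dots> \<le> p ^ n"
    using assms by (simp add: power_mono prime_ge_2_nat)
  finally show ?thesis .
qed

lemma multiplicity_le_self:
  assumes "prime (p::nat)" "x > 0"
  shows "multiplicity p x \<le> x"
proof -
  have "multiplicity p x < p ^ multiplicity p x"
    using assms(1) by (rule prime_power_gt_exponent)
  also have "\<dots> \<le> x"
    using multiplicity_dvd assms(2) by (rule dvd_imp_le)
  finally show ?thesis
    by simp
qed

lemma multiplicity_eq_card_prime_power_dvd:
  assumes p: "prime (p::nat)" and x: "x > 0"
  shows "multiplicity p x = card {i\<in>{1..x}. p ^ i dvd x}"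
proof -
  have dvd_iff: "p ^ i dvd x \<longleftrightarrow> i \<le> multiplicity p x" for i
    using x p not_prime_unit by (intro power_dvd_iff_le_multiplicity) auto
  have "{i\<in>{1..x}. p ^ i dvd x} = {1..multiplicity p x}"
  proof (intro set_eqI iffI)
    fix i assume "i \<in> {i\<in>{1..x}. p ^ i dvd x}"
    then show "i \<in> {1..multiplicity p x}"
      using dvd_iff[of i] by simp
  next
    fix i assume "i \<in> {1..multiplicity p x}"
    then show "i \<in> {i\<in>{1..x}. p ^ i dvd x}"
      using dvd_iff[of i] multiplicity_le_self[OF p x] by simp
  qed
  then show ?thesis
    by simp
qed

lemma multiplicity_fact:
  assumes p: "prime (p::nat)"
  shows "multiplicity p (fact n) = (\<Sum>i\<in>{1..n}. n div p ^ i)"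
proof (induction n)
  case (Suc n)
  have "multiplicity p (fact (Suc n) :: nat) = multiplicity p (Suc n * fact n)"
    by simp
  also have "\<dots> = multiplicity p (Suc n) + multiplicity p (fact n :: nat)"
    using p by (intro prime_elem_multiplicity_mult_distrib) auto
  also have "multiplicity p (Suc n) = card {i\<in>{1..Suc n}. p ^ i dvd Suc n}"
    using p by (simp add: multiplicity_eq_card_prime_power_dvd)
  also have "\<dots> = (\<Sum>i\<in>{1..Suc n}. if p ^ i dvd Suc n then 1 else 0)"
    unfolding card_eq_sum by (rule sum.inter_filter) simp
  also have "multiplicity p (fact n :: nat) = (\<Sum>i\<in>{1..Suc n}. n div p ^ i)"
    using Suc.IH prime_power_gt_exponent[OF p, of "Suc n"] by simp
  also have "(\<Sum>i\<in>{1..Suc n}. if p ^ i dvd Suc n then 1 else 0) + \<dots> = (\<Sum>i\<in>{1..Suc n}. Suc n div p ^ i)"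
    unfolding sum.distrib[symmetric]
    by (intro sum.cong refl) (simp add: div_Suc dvd_eq_mod_eq_0)
  finally show ?case .
qed simp

lemma double_div_ge: "2 * (n div q) \<le> 2*n div (q::nat)"
  by (metis add_self_div_2 div_mult2_eq mult_2 mult_2_right times_div_less_eq_dividend)

lemma double_div_le: "2*n div q \<le> 2 * (n div q) + (1::nat)"
proof (cases "q = 0")
  case False
  have "n < q * (n div q) + q"
    using mult_div_mod_eq[of q n] mod_less_divisor[of q n] False by linarith
  then have "2*n < (2 * (n div q) + 2) * q"
    by (simp add: algebra_simps)
  then have "2*n div q < 2 * (n div q) + 2"
    using False by (simp add: div_less_iff_less_mult)
  then show ?thesis
    by simp
qed simp

lemma multiplicity_central_binomial:
  assumes p: "prime (p::nat)"
  shows "multiplicity p (2*n choose n) = (\<Sum>i\<in>{1..2*n}. 2*n div p ^ i - 2 * (n div p ^ i))"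
proof -
  have "fact (2*n) = fact n * fact n * (2*n choose n)"
    using binomial_fact_lemma[of n "2*n"] by (simp add: mult_2)
  then have "multiplicity p (fact (2*n) :: nat)
      = 2 * multiplicity p (fact n :: nat) + multiplicity p (2*n choose n)"
    using p by (simp add: prime_elem_multiplicity_mult_distrib)
  then have "multiplicity p (2*n choose n) = (\<Sum>i\<in>{1..2*n}. 2*n div p ^ i) - 2 * (\<Sum>i\<in>{1..n}. n div p ^ i)"
    by (simp add: multiplicity_fact[OF p])
  also have "(\<Sum>i\<in>{1..n}. n div p ^ i) = (\<Sum>i\<in>{1..2*n}. n div p ^ i)"
  proof (rule sum.mono_neutral_left)
    have "n div p ^ i = 0" if "n < i" for i
      using that prime_power_gt_exponent[OF p, of i] by simp
    then show "\<forall>i\<in>{1..2*n} - {1..n}. n div p ^ i = 0"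
      by auto
  qed auto
  also have "(\<Sum>i\<in>{1..2*n}. 2*n div p ^ i) - 2 * \<dots> = (\<Sum>i\<in>{1..2*n}. 2*n div p ^ i - 2 * (n div p ^ i))"
    unfolding sum_distrib_left by (intro sum_subtractf_nat[symmetric]) (auto intro: double_div_ge)
  finally show ?thesis .
qed

lemma prime_power_multiplicity_central_binomial_le:
  assumes p: "prime (p::nat)" and n: "n \<ge> 1"
  shows "p ^ multiplicity p (2*n choose n) \<le> 2*n"
proof (rule ccontr)
  define v where "v = multiplicity p (2*n choose n)"
  assume "\<not> p ^ multiplicity p (2*n choose n) \<le> 2*n"
  then have large: "2*n < p ^ v"
    by (simp add: v_def)
  then have "v > 0"
    using n by (auto intro: gr0I)
  have "v = (\<Sum>i\<in>{1..2*n}. 2*n div p ^ i - 2 * (n div p ^ i))"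
    unfolding v_def by (rule multiplicity_central_binomial[OF p])
  also have "\<dots> \<le> (\<Sum>i\<in>{1..2*n}. if i < v then 1 else 0)"
  proof (rule sum_mono)
    fix i assume "i \<in> {1..2*n}"
    show "2*n div p ^ i - 2 * (n div p ^ i) \<le> (if i < v then 1 else 0)"
    proof (cases "i < v")
      case False
      then have "p ^ v \<le> p ^ i"
        using p by (intro power_increasing) (auto simp: prime_gt_0_nat Suc_leI)
      then show ?thesis
        using False large by simp
    qed (use double_div_le[of n "p ^ i"] in simp)
  qed
  also have "\<dots> = card {i\<in>{1..2*n}. i < v}"
    unfolding card_eq_sum by (rule sum.inter_filter[symmetric]) simp
  also have "\<dots> \<le> card {1..<v}"
    by (intro card_mono) auto
  also have "\<dots> < v"
    using \<open>v > 0\<close> by simp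
  finally show False
    by simp
qed

lemma central_binomial_le_power_prime_pi:
  assumes "n \<ge> 1"
  shows "(2*n choose n) \<le> (2*n) ^ prime_pi (2*n)"
proof -
  define C where "C = (2*n choose n)"
  have "prime_factors C \<subseteq> {p. prime p \<and> p \<le> 2*n}"
  proof
    fix p assume p: "p \<in> prime_factors C"
    then have "prime p"
      by (simp add: in_prime_factors_imp_prime)
    have "fact (2*n) = fact n * fact n * C"
      using binomial_fact_lemma[of n "2*n"] by (simp add: C_def mult_2)
    then have "C dvd fact (2*n)"
      by simp
    then have "p dvd fact (2*n)"
      using p by (meson dvd_trans in_prime_factors_imp_dvd)
    with \<open>prime p\<close> show "p \<in> {p. prime p \<and> p \<le> 2*n}"
      by (simp add: prime_dvd_fact_iff)
  qed
  then have card: "card (prime_factors C) \<le> prime_pi (2*n)"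
    unfolding prime_pi_def by (intro card_mono) auto
  have "C = (\<Prod>p\<in>prime_factors C. p ^ multiplicity p C)"
    by (rule prime_factorization_nat) (simp add: C_def)
  also have "\<dots> \<le> (\<Prod>p\<in>prime_factors C. 2*n)"
    unfolding C_def
    by (intro prod_mono conjI prime_power_multiplicity_central_binomial_le assms)
       (auto dest: in_prime_factors_imp_prime)
  also have "\<dots> = (2*n) ^ card (prime_factors C)"
    by simp
  also have "\<dots> \<le> (2*n) ^ prime_pi (2*n)"
    using card assms by (intro power_increasing) auto
  finally show ?thesis
    by (simp add: C_def)
qed

lemma prime_pi_mono: "M \<le> N \<Longrightarrow> prime_pi M \<le> prime_pi N"
  unfolding prime_pi_def by (intro card_mono) auto

lemma prime_pi_pos: "N \<ge> 2 \<Longrightarrow> prime_pi N > 0"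
  unfolding prime_pi_def by (subst card_gt_0_iff) (auto intro!: exI[of _ 2])

lemma two_power_le_power_prime_pi:
  assumes "n \<ge> 1"
  shows "(2::real) ^ n \<le> real (2*n) ^ prime_pi (2*n)"
proof -
  have "(2::real) ^ n = (real (2*n) / real n) ^ n"
    using assms by simp
  also have "\<dots> \<le> real (2*n choose n)"
    by (rule binomial_ge_n_over_k_pow_k) simp
  also have "\<dots> \<le> real ((2*n) ^ prime_pi (2*n))"
    using central_binomial_le_power_prime_pi[OF assms] by (simp only: of_nat_le_iff)
  also have "\<dots> = real (2*n) ^ prime_pi (2*n)"
    by (rule of_nat_power)
  finally show ?thesis .
qed

lemma prime_pi_lower:
  assumes "N \<ge> 2"
  shows "real N / (8 * ln (real N)) \<le> real (prime_pi N)"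
proof -
  define n where "n = N div 2"
  have "n > 0"
    using assms by (simp add: n_def div_greater_zero_iff)
  moreover have "N \<le> 2*n + 1"
    using mult_div_mod_eq[of 2 N] mod_less_divisor[of 2 N] unfolding n_def by linarith
  moreover have "2*n \<le> N"
    unfolding n_def by simp
  ultimately have n: "n \<ge> 1" "2*n \<le> N" "N \<le> 4 * n"
    by auto
  have "real n * ln 2 = ln ((2::real) ^ n)"
    by (simp add: ln_realpow)
  also have "\<dots> \<le> ln (real (2*n) ^ prime_pi (2*n))"
    using two_power_le_power_prime_pi[OF n(1)] n by (subst ln_le_cancel_iff) auto
  also have "\<dots> = real (prime_pi (2*n)) * ln (real (2*n))"
    by (rule ln_realpow)
  also have "\<dots> \<le> real (prime_pi N) * ln (real N)"
    using n prime_pi_mono[OF n(2)] by (intro mult_mono) auto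
  finally have "real n * ln 2 \<le> real (prime_pi N) * ln (real N)" .
  moreover have "real n * (1/2) \<le> real n * ln 2"
    using ln2_ge_two_thirds by (intro mult_left_mono) auto
  moreover have "real N \<le> 4 * real n"
    using n(3) by linarith
  ultimately have "real N / 8 \<le> real (prime_pi N) * ln (real N)"
    by linarith
  then show ?thesis
    using assms by (simp add: field_simps)
qed

section \<open>Counting smooth numbers\<close>

definition smooth_numbers :: "nat \<Rightarrow> nat \<Rightarrow> nat set" where
  "smooth_numbers N x = {m. 0 < m \<and> m \<le> x \<and> (\<forall>p. prime p \<longrightarrow> p dvd m \<longrightarrow> p \<le> N)}"

lemma finite_smooth_numbers [simp]: "finite (smooth_numbers N x)"
  unfolding smooth_numbers_def by (rule finite_subset[of _ "{..x}"]) auto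

lemma smooth_number_eq_prod:
  assumes "m \<in> smooth_numbers N x"
  shows "m = (\<Prod>p\<in>{p. prime p \<and> p \<le> N}. p ^ multiplicity p m)"
proof -
  have "m > 0"
    using assms by (simp add: smooth_numbers_def)
  then have "m = (\<Prod>p\<in>prime_factors m. p ^ multiplicity p m)"
    by (rule prime_factorization_nat)
  also have "\<dots> = (\<Prod>p\<in>{p. prime p \<and> p \<le> N}. p ^ multiplicity p m)"
  proof (rule prod.mono_neutral_left)
    show "prime_factors m \<subseteq> {p. prime p \<and> p \<le> N}"
      using assms by (auto simp: smooth_numbers_def in_prime_factors_iff)
    show "\<forall>p\<in>{p. prime p \<and> p \<le> N} - prime_factors m. p ^ multiplicity p m = 1"
      using \<open>m > 0\<close> by (auto simp: in_prime_factors_iff not_dvd_imp_multiplicity_0)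
  qed simp
  finally show ?thesis .
qed

lemma smooth_number_powr_eq_prod:
  assumes "m \<in> smooth_numbers N x"
  shows "real m powr r = (\<Prod>p\<in>{p. prime p \<and> p \<le> N}. (real p powr r) ^ multiplicity p m)"
proof -
  have "real m = (\<Prod>p\<in>{p. prime p \<and> p \<le> N}. real p ^ multiplicity p m)"
    using arg_cong[OF smooth_number_eq_prod[OF assms], of real] by simp
  then have "real m powr r = (\<Prod>p\<in>{p. prime p \<and> p \<le> N}. (real p ^ multiplicity p m) powr r)"
    by (simp add: prod_powr_distrib)
  also have "\<dots> = (\<Prod>p\<in>{p. prime p \<and> p \<le> N}. (real p powr r) ^ multiplicity p m)"
    by (intro prod.cong refl)
       (simp add: powr_power powr_powr prime_gt_0_nat mult.commute flip: powr_realpow)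
  finally show ?thesis .
qed

lemma sum_atMost_power_le:
  fixes y :: real
  assumes "0 \<le> y" "y < 1"
  shows "(\<Sum>k\<le>n. y ^ k) \<le> 1 / (1 - y)"
proof -
  have "(\<Sum>k\<le>n. y ^ k) = (\<Sum>k<Suc n. y ^ k)"
    by (simp only: lessThan_Suc_atMost)
  also have "\<dots> = (1 - y ^ Suc n) / (1 - y)"
    using assms by (subst sum_gp_strict) auto
  also have "\<dots> \<le> 1 / (1 - y)"
    using assms by (intro divide_right_mono) auto
  finally show ?thesis .
qed

definition prime_exponents :: "nat \<Rightarrow> nat \<Rightarrow> nat \<Rightarrow> nat" where
  "prime_exponents N m = restrict (\<lambda>p. multiplicity p m) {p. prime p \<and> p \<le> N}"

lemma inj_on_prime_exponents: "inj_on (prime_exponents N) (smooth_numbers N x)"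
proof (rule inj_onI)
  fix m m' assume m: "m \<in> smooth_numbers N x" "m' \<in> smooth_numbers N x"
    and eq: "prime_exponents N m = prime_exponents N m'"
  have "multiplicity p m = multiplicity p m'" if "p \<in> {p. prime p \<and> p \<le> N}" for p
    using fun_cong[OF eq, of p] that by (simp add: prime_exponents_def)
  then have "(\<Prod>p\<in>{p. prime p \<and> p \<le> N}. p ^ multiplicity p m)
      = (\<Prod>p\<in>{p. prime p \<and> p \<le> N}. p ^ multiplicity p m')"
    by (intro prod.cong) auto
  then show "m = m'"
    using smooth_number_eq_prod[OF m(1)] smooth_number_eq_prod[OF m(2)] by simp
qed

lemma prime_exponents_in_PiE:
  assumes "m \<in> smooth_numbers N x"
  shows "prime_exponents N m \<in> PiE {p. prime p \<and> p \<le> N} (\<lambda>_. {..x})"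
proof -
  have "0 < m" "m \<le> x"
    using assms by (auto simp: smooth_numbers_def)
  then have "multiplicity p m \<le> x" if "prime p" for p
    using multiplicity_le_self[OF that] by (meson order_trans)
  then show ?thesis
    by (simp add: prime_exponents_def restrict_PiE_iff)
qed

lemma sum_smooth_numbers_powr_le:
  assumes "s > 0"
  shows "(\<Sum>m\<in>smooth_numbers N x. real m powr -s)
    \<le> (\<Prod>p\<in>{p. prime p \<and> p \<le> N}. 1 / (1 - real p powr -s))"
proof -
  define P where "P = {p::nat. prime p \<and> p \<le> N}"
  define S where "S = smooth_numbers N x"
  have y: "0 \<le> real p powr -s" "real p powr -s < 1" if "p \<in> P" for p
    using that assms by (auto simp: P_def intro!: powr_less_one dest: prime_gt_1_nat)
  have "(\<Sum>m\<in>S. real m powr -s) = (\<Sum>m\<in>S. \<Prod>p\<in>P. (real p powr -s) ^ prime_exponents N m p)"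
    by (intro sum.cong refl)
       (auto simp: prime_exponents_def S_def P_def smooth_number_powr_eq_prod intro!: prod.cong)
  also have "\<dots> = (\<Sum>a\<in>prime_exponents N ` S. \<Prod>p\<in>P. (real p powr -s) ^ a p)"
    unfolding S_def by (simp add: sum.reindex[OF inj_on_prime_exponents])
  also have "\<dots> \<le> (\<Sum>a\<in>PiE P (\<lambda>_. {..x}). \<Prod>p\<in>P. (real p powr -s) ^ a p)"
  proof (rule sum_mono2)
    show "finite (PiE P (\<lambda>_. {..x}))"
      by (simp add: P_def finite_PiE)
    show "prime_exponents N ` S \<subseteq> PiE P (\<lambda>_. {..x})"
      unfolding S_def P_def using prime_exponents_in_PiE by blast
    show "0 \<le> (\<Prod>p\<in>P. (real p powr -s) ^ a p)" for a
      by (intro prod_nonneg) simp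
  qed
  also have "\<dots> = (\<Prod>p\<in>P. \<Sum>k\<le>x. (real p powr -s) ^ k)"
    by (simp add: prod_sum_PiE P_def)
  also have "\<dots> \<le> (\<Prod>p\<in>P. 1 / (1 - real p powr -s))"
    using y by (intro prod_mono conjI sum_nonneg sum_atMost_power_le) auto
  finally show ?thesis
    by (simp add: S_def P_def)
qed

lemma card_smooth_numbers_le:
  assumes "s > 0"
  shows "real (card (smooth_numbers N x))
    \<le> real x powr s * (\<Prod>p\<in>{p. prime p \<and> p \<le> N}. 1 / (1 - real p powr -s))"
proof -
  have "real (card (smooth_numbers N x)) = (\<Sum>m\<in>smooth_numbers N x. 1)"
    by simp
  also have "\<dots> \<le> (\<Sum>m\<in>smooth_numbers N x. real x powr s * real m powr -s)"
  proof (rule sum_mono)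
    fix m assume "m \<in> smooth_numbers N x"
    then have "0 < m" "m \<le> x"
      by (auto simp: smooth_numbers_def)
    then have "real m powr s \<le> real x powr s"
      using assms by (intro powr_mono2) auto
    then show "1 \<le> real x powr s * real m powr -s"
      using \<open>0 < m\<close> by (simp add: powr_minus field_simps)
  qed
  also have "\<dots> = real x powr s * (\<Sum>m\<in>smooth_numbers N x. real m powr -s)"
    by (simp add: sum_distrib_left)
  also have "\<dots> \<le> real x powr s * (\<Prod>p\<in>{p. prime p \<and> p \<le> N}. 1 / (1 - real p powr -s))"
    using sum_smooth_numbers_powr_le[OF assms] by (intro mult_left_mono) auto
  finally show ?thesis .
qed

lemma inverse_one_minus_exp_neg_le:
  fixes u :: real
  assumes "u > 0"
  shows "1 / (1 - exp (- u)) \<le> 1 + 1 / u"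
proof -
  have "u \<le> exp u - 1"
    using exp_ge_add_one_self[of u] by linarith
  then have "1 / (exp u - 1) \<le> 1 / u"
    using assms by (intro divide_left_mono) auto
  moreover have "1 / (1 - exp (- u)) = 1 + 1 / (exp u - 1)"
    using assms by (simp add: exp_minus field_simps)
  ultimately show ?thesis
    by simp
qed

lemma card_smooth_numbers_power_le:
  assumes "N \<ge> 2"
  shows "real (card (smooth_numbers N (N ^ j)))
    \<le> exp (real j) * (\<Prod>p\<in>{p. prime p \<and> p \<le> N}. 1 + ln (real N) / ln (real p))"
proof -
  define L where "L = ln (real N)"
  have "L > 0"
    using assms by (simp add: L_def)
  have factor: "0 \<le> 1 / (1 - real p powr - (1 / L)) \<and> 1 / (1 - real p powr - (1 / L)) \<le> 1 + L / ln (real p)"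
    if "p \<in> {p. prime p \<and> p \<le> N}" for p
  proof
    have "real p powr - (1 / L) < 1"
      using that \<open>L > 0\<close> by (intro powr_less_one) (auto dest: prime_gt_1_nat)
    then show "0 \<le> 1 / (1 - real p powr - (1 / L))"
      by simp
    have "ln (real p) > 0"
      using that by (auto dest: prime_gt_1_nat)
    then have "1 / (1 - exp (- (ln (real p) / L))) \<le> 1 + 1 / (ln (real p) / L)"
      using \<open>L > 0\<close> by (intro inverse_one_minus_exp_neg_le) simp
    then show "1 / (1 - real p powr - (1 / L)) \<le> 1 + L / ln (real p)"
      using that by (simp add: powr_def prime_gt_0_nat)
  qed
  have "real (card (smooth_numbers N (N ^ j)))
      \<le> real (N ^ j) powr (1 / L) * (\<Prod>p\<in>{p. prime p \<and> p \<le> N}. 1 / (1 - real p powr - (1 / L)))"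
    using \<open>L > 0\<close> by (intro card_smooth_numbers_le) simp
  also have "real (N ^ j) powr (1 / L) = exp (real j)"
    using assms \<open>L > 0\<close> by (simp add: powr_def ln_realpow L_def)
  also have "exp (real j) * (\<Prod>p\<in>{p. prime p \<and> p \<le> N}. 1 / (1 - real p powr - (1 / L)))
      \<le> exp (real j) * (\<Prod>p\<in>{p. prime p \<and> p \<le> N}. 1 + L / ln (real p))"
    using factor by (intro mult_left_mono prod_mono) auto
  finally show ?thesis
    by (simp add: L_def)
qed

lemma ln_squared_le_sqrt:
  fixes x :: real
  assumes "x \<ge> 1"
  shows "(ln x)^2 \<le> 16 * sqrt x"
proof -
  have "ln x = 4 * ln (x powr (1/4))"
    using assms by (simp add: ln_powr)
  also have "\<dots> \<le> 4 * x powr (1/4)"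
    using assms ln_le_minus_one[of "x powr (1/4)"] by simp
  finally have "(ln x)^2 \<le> (4 * x powr (1/4))^2"
    using assms by (intro power_mono) auto
  also have "\<dots> = 16 * sqrt x"
    using assms by (simp add: power_mult_distrib powr_power powr_half_sqrt)
  finally show ?thesis .
qed

lemma ln_mult_sqrt_le_prime_pi:
  assumes "N \<ge> 2"
  shows "2 * ln (real N) * sqrt (real N) \<le> 256 * real (prime_pi N)"
proof -
  have "ln (real N) > 0"
    using assms by simp
  have "2 * ln (real N) * sqrt (real N) * ln (real N) = 2 * sqrt (real N) * (ln (real N))^2"
    by (simp add: power2_eq_square)
  also have "\<dots> \<le> 2 * sqrt (real N) * (16 * sqrt (real N))"
    using ln_squared_le_sqrt[of "real N"] assms by (intro mult_left_mono) auto
  also have "\<dots> = 32 * real N"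
    by simp
  finally have "2 * ln (real N) * sqrt (real N) * ln (real N) \<le> 32 * real N" .
  then have "2 * ln (real N) * sqrt (real N) \<le> 256 * (real N / (8 * ln (real N)))"
    using \<open>ln (real N) > 0\<close> by (simp add: field_simps)
  also have "\<dots> \<le> 256 * real (prime_pi N)"
    using prime_pi_lower[OF assms] by simp
  finally show ?thesis .
qed

lemma one_add_ln_div_ln_prime_le:
  assumes "N \<ge> 2" "prime p" "p \<le> N"
  shows "1 + ln (real N) / ln (real p) \<le> exp (if p * p \<le> N then 2 * ln (real N) else 2)"
proof -
  have "p \<ge> 2"
    using assms by (simp add: prime_ge_2_nat)
  then have "ln 2 \<le> ln (real p)"
    by simp
  then have "ln (real N) / ln (real p) \<le> ln (real N) / (1/2)"
    using ln2_ge_two_thirds assms by (intro divide_left_mono) auto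
  moreover have "ln (real N) / ln (real p) < 2" if "N < p * p"
  proof -
    have "real N < real p ^ 2"
      using that by (simp add: power2_eq_square flip: of_nat_mult)
    then have "ln (real N) < ln (real p ^ 2)"
      using assms \<open>p \<ge> 2\<close> by (intro ln_less_cancel_iff[THEN iffD2]) auto
    then show ?thesis
      using \<open>ln 2 \<le> ln (real p)\<close> ln2_ge_two_thirds by (simp add: ln_realpow divide_less_eq)
  qed
  ultimately have bound: "ln (real N) / ln (real p) \<le> (if p * p \<le> N then 2 * ln (real N) else 2)"
    by auto
  have "1 + ln (real N) / ln (real p) \<le> exp (ln (real N) / ln (real p))"
    by (rule exp_ge_add_one_self)
  also have "\<dots> \<le> exp (if p * p \<le> N then 2 * ln (real N) else 2)"
    using bound by (simp split: if_split_asm)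
  finally show ?thesis .
qed

lemma prod_one_add_ln_div_ln_le:
  assumes "N \<ge> 2"
  shows "(\<Prod>p\<in>{p. prime p \<and> p \<le> N}. 1 + ln (real N) / ln (real p)) \<le> exp (258 * real (prime_pi N))"
proof -
  define L where "L = ln (real N)"
  define P where "P = {p. prime p \<and> p \<le> N}"
  have "L > 0"
    using assms by (simp add: L_def)
  have "(\<Prod>p\<in>P. 1 + L / ln (real p)) \<le> (\<Prod>p\<in>P. exp (if p * p \<le> N then 2 * L else 2))"
  proof (rule prod_mono)
    fix p assume p: "p \<in> P"
    then have "ln (real p) > 0"
      by (auto simp: P_def dest: prime_gt_1_nat)
    then show "0 \<le> 1 + L / ln (real p) \<and> 1 + L / ln (real p) \<le> exp (if p * p \<le> N then 2 * L else 2)"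
      using one_add_ln_div_ln_prime_le[OF assms, of p] p \<open>L > 0\<close>
      by (simp add: P_def L_def split: if_split_asm)
  qed
  also have "\<dots> = exp (2 * L * card {p. prime p \<and> p * p \<le> N} + 2 * card {p. prime p \<and> p \<le> N \<and> N < p * p})"
  proof -
    have "P \<inter> {p. p * p \<le> N} = {p. prime p \<and> p * p \<le> N}"
      by (auto simp: P_def intro: order_trans[OF le_square])
    moreover have "P \<inter> - {p. p * p \<le> N} = {p. prime p \<and> p \<le> N \<and> N < p * p}"
      by (auto simp: P_def)
    ultimately show ?thesis
      by (simp add: exp_sum[symmetric] sum.If_cases P_def)
  qed
  also have "\<dots> \<le> exp (2 * L * sqrt (real N) + 2 * real (prime_pi N))"
  proof -
    have "2 * L * card {p. prime p \<and> p * p \<le> N} \<le> 2 * L * sqrt (real N)"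
      using card_primes_le_sqrt[of N] \<open>L > 0\<close> by (intro mult_left_mono) auto
    moreover have "card {p. prime p \<and> p \<le> N \<and> N < p * p} \<le> prime_pi N"
      using prime_pi_eq_card_small_add_card_large[of N] by simp
    ultimately show ?thesis
      by simp
  qed
  also have "\<dots> \<le> exp (258 * real (prime_pi N))"
    using ln_mult_sqrt_le_prime_pi[OF assms] by (simp add: L_def)
  finally show ?thesis
    by (simp add: P_def L_def)
qed

lemma card_smooth_numbers_le_exp:
  assumes "N \<ge> 2" "prime_pi N \<le> j"
  shows "real (card (smooth_numbers N (N ^ j))) \<le> exp (259 * real j)"
proof -
  have "real (card (smooth_numbers N (N ^ j)))
      \<le> exp (real j) * (\<Prod>p\<in>{p. prime p \<and> p \<le> N}. 1 + ln (real N) / ln (real p))"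
    by (rule card_smooth_numbers_power_le[OF assms(1)])
  also have "\<dots> \<le> exp (real j) * exp (258 * real (prime_pi N))"
    using prod_one_add_ln_div_ln_le[OF assms(1)] by simp
  also have "\<dots> \<le> exp (real j) * exp (258 * real j)"
    using assms(2) by simp
  also have "\<dots> = exp (259 * real j)"
    by (simp flip: exp_add)
  finally show ?thesis .
qed

section \<open>Mean values\<close>

lemma Cauchy_if_dist_le_null_sum:
  fixes L :: "nat \<Rightarrow> 'a::metric_space"
  assumes "\<epsilon> \<longlonglongrightarrow> 0" "\<And>m n. dist (L m) (L n) \<le> \<epsilon> m + \<epsilon> n"
  shows "Cauchy L"
proof (rule metric_CauchyI)
  fix e :: real assume "e > 0"
  then obtain M where M: "\<And>n. n \<ge> M \<Longrightarrow> \<epsilon> n < e / 2"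
    using order_tendstoD(2)[OF assms(1), of "e / 2"] by (auto simp: eventually_sequentially)
  have "dist (L m) (L n) < e" if "m \<ge> M" "n \<ge> M" for m n
    using assms(2)[of m n] M[OF that(1)] M[OF that(2)] by linarith
  then show "\<exists>M. \<forall>m\<ge>M. \<forall>n\<ge>M. dist (L m) (L n) < e"
    by blast
qed

lemma tendsto_of_approximating_limits:
  fixes h :: "'a \<Rightarrow> 'b::metric_space"
  assumes "\<epsilon> \<longlonglongrightarrow> 0" "L \<longlonglongrightarrow> L0" "\<And>n. (g n \<longlongrightarrow> L n) F"
    and "\<And>n. \<forall>\<^sub>F x in F. dist (h x) (g n x) \<le> \<epsilon> n"
  shows "(h \<longlongrightarrow> L0) F"
proof (rule tendstoI)
  fix e :: real assume "e > 0"
  then have "\<forall>\<^sub>F n in sequentially. \<epsilon> n < e / 3 \<and> dist (L n) L0 < e / 3"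
    using assms(1,2) by (intro eventually_conj order_tendstoD(2) tendstoD) auto
  then obtain n where n: "\<epsilon> n < e / 3" "dist (L n) L0 < e / 3"
    by (auto simp: eventually_sequentially)
  have "e / 3 > 0"
    using \<open>e > 0\<close> by simp
  show "\<forall>\<^sub>F x in F. dist (h x) L0 < e"
    using assms(4)[of n] tendstoD[OF assms(3)[of n] \<open>e / 3 > 0\<close>]
  proof eventually_elim
    case (elim x)
    then show ?case
      using n dist_triangle[of "h x" L0 "g n x"] dist_triangle[of "g n x" L0 "L n"] by linarith
  qed
qed

lemma convergent_of_uniform_approximation:
  fixes h :: "'a \<Rightarrow> 'b::complete_space"
  assumes "F \<noteq> bot"
    and approx: "\<And>e. e > 0 \<Longrightarrow> \<exists>g L. (g \<longlongrightarrow> L) F \<and> (\<forall>\<^sub>F x in F. dist (h x) (g x) \<le> e)"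
  shows "\<exists>L. (h \<longlongrightarrow> L) F"
proof -
  define \<epsilon> :: "nat \<Rightarrow> real" where "\<epsilon> n = inverse (real (Suc n))" for n
  have "\<epsilon> \<longlonglongrightarrow> 0"
    unfolding \<epsilon>_def by (rule LIMSEQ_inverse_real_of_nat)
  have "\<forall>n. \<exists>g L. (g \<longlongrightarrow> L) F \<and> (\<forall>\<^sub>F x in F. dist (h x) (g x) \<le> \<epsilon> n)"
    using approx by (simp add: \<epsilon>_def)
  then obtain g L where g: "\<And>n. (g n \<longlongrightarrow> L n) F" "\<And>n. \<forall>\<^sub>F x in F. dist (h x) (g n x) \<le> \<epsilon> n"
    by metis
  have "dist (L m) (L n) \<le> \<epsilon> m + \<epsilon> n" for m n
  proof (rule tendsto_le[OF assms(1) tendsto_const tendsto_dist[OF g(1) g(1)]])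
    show "\<forall>\<^sub>F x in F. dist (g m x) (g n x) \<le> \<epsilon> m + \<epsilon> n"
      using g(2)[of m] g(2)[of n]
    proof eventually_elim
      case (elim x)
      then show ?case
        using dist_triangle[of "g m x" "g n x" "h x"] dist_commute[of "h x" "g m x"] by linarith
    qed
  qed
  with \<open>\<epsilon> \<longlonglongrightarrow> 0\<close> have "Cauchy L"
    by (rule Cauchy_if_dist_le_null_sum)
  then obtain L0 where "L \<longlonglongrightarrow> L0"
    using Cauchy_convergent_iff convergent_def by blast
  then have "(h \<longlongrightarrow> L0) F"
    by (rule tendsto_of_approximating_limits[OF \<open>\<epsilon> \<longlonglongrightarrow> 0\<close> _ g])
  then show ?thesis ..
qed

definition mean_value :: "(real \<Rightarrow> real) \<Rightarrow> real \<Rightarrow> real" where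
  "mean_value g T = (1 / T) * integral {0..T} g"

lemma integrable_on_Icc_if_continuous_on:
  "continuous_on UNIV (g :: real \<Rightarrow> real) \<Longrightarrow> g integrable_on {a..b}"
  by (rule integrable_continuous_interval) (rule continuous_on_subset, auto)

lemma mean_value_mono:
  assumes "continuous_on UNIV g" "continuous_on UNIV h" "T > 0" "\<And>t. t \<ge> 0 \<Longrightarrow> g t \<le> h t"
  shows "mean_value g T \<le> mean_value h T"
  unfolding mean_value_def using assms
  by (intro mult_left_mono integral_le integrable_on_Icc_if_continuous_on) auto

lemma mean_value_affine:
  assumes "continuous_on UNIV g" "T > 0"
  shows "mean_value (\<lambda>t. a + b * g t) T = a + b * mean_value g T"
proof -
  have "integral {0..T} (\<lambda>t. a + b * g t) = a * T + b * integral {0..T} g"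
    using assms by (subst integral_add) (auto intro!: integrable_on_Icc_if_continuous_on continuous_intros)
  then show ?thesis
    using assms(2) by (simp add: mean_value_def field_simps)
qed

lemma mean_value_cmult: "mean_value (\<lambda>t. c * g t) = (\<lambda>T. c * mean_value g T)"
  by (simp add: fun_eq_iff mean_value_def)

lemma mean_value_sum:
  assumes "finite I" "\<And>i. i \<in> I \<Longrightarrow> continuous_on UNIV (g i)"
  shows "mean_value (\<lambda>t. \<Sum>i\<in>I. g i t) T = (\<Sum>i\<in>I. mean_value (g i) T)"
  unfolding mean_value_def sum_distrib_left[symmetric]
  using assms by (subst integral_sum) (auto intro: integrable_on_Icc_if_continuous_on)

lemma tendsto_mean_value_sum:
  assumes "finite I" "\<And>i. i \<in> I \<Longrightarrow> continuous_on UNIV (g i)"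
    and "\<And>i. i \<in> I \<Longrightarrow> (mean_value (g i) \<longlongrightarrow> L i) at_top"
  shows "(mean_value (\<lambda>t. \<Sum>i\<in>I. g i t) \<longlongrightarrow> (\<Sum>i\<in>I. L i)) at_top"
proof -
  have "mean_value (\<lambda>t. \<Sum>i\<in>I. g i t) = (\<lambda>T. \<Sum>i\<in>I. mean_value (g i) T)"
    by (rule ext) (rule mean_value_sum[OF assms(1,2)])
  then show ?thesis
    by (simp add: tendsto_sum assms(3))
qed

lemma convergent_mean_value_of_uniform_approximation:
  assumes h: "continuous_on UNIV h"
    and approx: "\<And>e. e > 0 \<Longrightarrow> \<exists>g L. continuous_on UNIV g \<and> (mean_value g \<longlongrightarrow> L) at_top \<and>
      (\<forall>t\<ge>0. \<bar>h t - g t\<bar> \<le> e)"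
  shows "\<exists>L. (mean_value h \<longlongrightarrow> L) at_top"
proof (rule convergent_of_uniform_approximation)
  fix e :: real assume "e > 0"
  then obtain g L where g: "continuous_on UNIV g" "(mean_value g \<longlongrightarrow> L) at_top"
    and close: "\<And>t. t \<ge> 0 \<Longrightarrow> \<bar>h t - g t\<bar> \<le> e"
    using approx by blast
  have near: "dist (mean_value h T) (mean_value g T) \<le> e" if "T > 0" for T
  proof -
    have "h t \<le> e + 1 * g t" "g t \<le> e + 1 * h t" if "t \<ge> 0" for t
      using close[OF that] by (auto simp: abs_le_iff)
    then have "mean_value h T \<le> mean_value (\<lambda>t. e + 1 * g t) T"
      "mean_value g T \<le> mean_value (\<lambda>t. e + 1 * h t) T"
      using h g that by (auto intro!: mean_value_mono continuous_intros)
    then show ?thesis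
      using mean_value_affine[OF h that, of e 1] mean_value_affine[OF g(1) that, of e 1]
      by (simp add: dist_real_def abs_le_iff)
  qed
  have "\<forall>\<^sub>F T in at_top. dist (mean_value h T) (mean_value g T) \<le> e"
    using eventually_gt_at_top[of 0] by eventually_elim (rule near)
  then show "\<exists>g L. (g \<longlongrightarrow> L) at_top \<and> (\<forall>\<^sub>F T in at_top. dist (mean_value h T) (g T) \<le> e)"
    using g(2) by blast
qed simp

lemma powr_le_tangent:
  fixes y y0 \<theta> :: real
  assumes "y \<ge> 0" "y0 > 0" "0 < \<theta>" "\<theta> \<le> 1"
  shows "y powr \<theta> \<le> y0 powr \<theta> + \<theta> * y0 powr (\<theta> - 1) * (y - y0)"
proof -
  have bernoulli: "x powr \<theta> \<le> 1 + \<theta> * (x - 1)" if "x \<ge> 0" for x :: real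
  proof (cases "x = 0")
    case False
    have "exp ((1 - \<theta>) *\<^sub>R 0 + \<theta> *\<^sub>R ln x) \<le> (1 - \<theta>) * exp 0 + \<theta> * exp (ln x)"
      using assms by (intro convex_onD[OF exp_convex]) auto
    then show ?thesis
      using False that by (simp add: powr_def algebra_simps)
  qed (use assms in simp)
  have "y powr \<theta> = y0 powr \<theta> * (y / y0) powr \<theta>"
    using assms by (simp add: powr_divide)
  also have "\<dots> \<le> y0 powr \<theta> * (1 + \<theta> * (y / y0 - 1))"
    using bernoulli[of "y / y0"] assms by (intro mult_left_mono) auto
  also have "\<dots> = y0 powr \<theta> + \<theta> * (y0 powr \<theta> / y0) * (y - y0)"
    using assms by (simp add: field_simps)
  also have "y0 powr \<theta> / y0 = y0 powr (\<theta> - 1)"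
    using assms by (simp add: powr_diff)
  finally show ?thesis .
qed

lemma mean_value_nonneg:
  assumes "continuous_on UNIV Y" "\<And>t. Y t \<ge> 0" "T > 0"
  shows "mean_value Y T \<ge> 0"
  using mean_value_mono[of "\<lambda>_. 0" Y T] assms by (simp add: mean_value_def)

lemma mean_value_powr_le_tangent:
  assumes Y: "continuous_on UNIV Y" "\<And>t. Y t \<ge> 0" and T: "T > 0" and \<theta>: "0 < \<theta>" "\<theta> \<le> 1"
    and "y0 > 0"
  shows "mean_value (\<lambda>t. Y t powr \<theta>) T \<le> y0 powr \<theta> + \<theta> * y0 powr (\<theta> - 1) * (mean_value Y T - y0)"
proof -
  define a where "a = y0 powr \<theta> - \<theta> * y0 powr (\<theta> - 1) * y0"
  define b where "b = \<theta> * y0 powr (\<theta> - 1)"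
  have "Y t powr \<theta> \<le> a + b * Y t" for t
    using powr_le_tangent[OF Y(2) \<open>y0 > 0\<close> \<theta>, of t] by (simp add: a_def b_def algebra_simps)
  moreover have "continuous_on UNIV (\<lambda>t. Y t powr \<theta>)"
    using Y \<theta> by (intro continuous_on_powr') auto
  ultimately have "mean_value (\<lambda>t. Y t powr \<theta>) T \<le> mean_value (\<lambda>t. a + b * Y t) T"
    using Y(1) T by (intro mean_value_mono) (auto intro!: continuous_intros)
  also have "\<dots> = a + b * mean_value Y T"
    by (rule mean_value_affine[OF Y(1) T])
  finally show ?thesis
    by (simp add: a_def b_def algebra_simps)
qed

lemma mean_value_powr_le:
  assumes Y: "continuous_on UNIV Y" "\<And>t. Y t \<ge> 0" and T: "T > 0" and \<theta>: "0 < \<theta>" "\<theta> \<le> 1"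
  shows "mean_value (\<lambda>t. Y t powr \<theta>) T \<le> mean_value Y T powr \<theta>"
proof (cases "mean_value Y T > 0")
  case True
  then show ?thesis
    using mean_value_powr_le_tangent[OF Y T \<theta> True] by simp
next
  case False
  with mean_value_nonneg[OF Y T] have "mean_value Y T = 0"
    by simp
  have "mean_value (\<lambda>t. Y t powr \<theta>) T \<le> e" if "e > 0" for e
  proof -
    define y0 where "y0 = e powr (1 / \<theta>)"
    have "y0 > 0" "y0 powr \<theta> = e"
      using that \<theta> by (simp_all add: y0_def powr_powr)
    moreover have "0 \<le> \<theta> * y0 powr (\<theta> - 1) * y0"
      using \<theta> \<open>y0 > 0\<close> by simp
    ultimately show ?thesis
      using mean_value_powr_le_tangent[OF Y T \<theta> \<open>y0 > 0\<close>] \<open>mean_value Y T = 0\<close> by simp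
  qed
  then show ?thesis
    using \<open>mean_value Y T = 0\<close> by (simp add: field_le_epsilon)
qed

lemma tendsto_mean_value_powr_le:
  assumes Y: "continuous_on UNIV Y" "\<And>t. Y t \<ge> 0" and \<theta>: "0 < \<theta>" "\<theta> \<le> 1"
    and lim: "(mean_value Y \<longlongrightarrow> a) at_top" "(mean_value (\<lambda>t. Y t powr \<theta>) \<longlongrightarrow> b) at_top"
  shows "b \<le> a powr \<theta>"
proof (rule tendsto_le[OF trivial_limit_at_top_linorder])
  have "\<forall>\<^sub>F T in at_top. mean_value Y T \<ge> 0"
    using eventually_gt_at_top[of 0] by eventually_elim (rule mean_value_nonneg[OF Y])
  then show "((\<lambda>T. mean_value Y T powr \<theta>) \<longlongrightarrow> a powr \<theta>) at_top"
    using lim(1) \<theta> by (intro tendsto_powr2) auto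
  show "\<forall>\<^sub>F T in at_top. mean_value (\<lambda>t. Y t powr \<theta>) T \<le> mean_value Y T powr \<theta>"
    using eventually_gt_at_top[of 0] by eventually_elim (rule mean_value_powr_le[OF Y _ \<theta>])
qed (rule lim(2))

lemma exp_i_has_integral:
  fixes l T :: real
  assumes "l \<noteq> 0" "T \<ge> 0"
  shows "((\<lambda>t. exp (\<i> * of_real (l * t))) has_integral (exp (\<i> * of_real (l * T)) - 1) / (\<i> * of_real l)) {0..T}"
proof -
  define F where "F z = exp (\<i> * (of_real l * z)) / (\<i> * of_real l)" for z
  have "(F has_field_derivative exp (\<i> * (of_real l * z))) (at z)" for z
    unfolding F_def using assms(1) by (auto intro!: derivative_eq_intros simp: field_simps)
  then have "((\<lambda>t. exp (\<i> * of_real (l * t))) has_integral F (of_real T) - F (of_real 0)) {0..T}"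
    by (intro fundamental_theorem_of_calculus[OF assms(2)] has_vector_derivative_real_field) simp
  then show ?thesis
    by (simp add: F_def diff_divide_distrib)
qed

lemma tendsto_mean_value_Re_exp_i:
  fixes a :: complex and l :: real
  shows "(mean_value (\<lambda>t. Re (a * exp (\<i> * of_real (l * t)))) \<longlongrightarrow> (if l = 0 then Re a else 0)) at_top"
proof (cases "l = 0")
  case True
  have "\<forall>\<^sub>F T in at_top. mean_value (\<lambda>t. Re (a * exp (\<i> * of_real (l * t)))) T = Re a"
    using eventually_gt_at_top[of 0] by eventually_elim (simp add: True mean_value_def)
  with True show ?thesis
    by (simp add: tendsto_eventually)
next
  case False
  have bound: "\<bar>mean_value (\<lambda>t. Re (a * exp (\<i> * of_real (l * t)))) T\<bar> \<le> 2 * cmod a / \<bar>l\<bar> / T"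
    if "T > 0" for T
  proof -
    let ?I = "a * ((exp (\<i> * of_real (l * T)) - 1) / (\<i> * of_real l))"
    have "((\<lambda>t. Re (a * exp (\<i> * of_real (l * t)))) has_integral Re ?I) {0..T}"
      using exp_i_has_integral[OF False less_imp_le[OF that]]
      by (intro has_integral_linear[OF has_integral_mult_right bounded_linear_Re, unfolded o_def])
    then have "\<bar>mean_value (\<lambda>t. Re (a * exp (\<i> * of_real (l * t)))) T\<bar> = \<bar>Re ?I\<bar> / T"
      using that by (simp add: mean_value_def integral_unique abs_divide)
    also have "\<bar>Re ?I\<bar> \<le> 2 * cmod a / \<bar>l\<bar>"
    proof -
      have "cmod (exp (\<i> * of_real (l * T)) - 1) \<le> 2"
        using norm_triangle_ineq4[of "exp (\<i> * of_real (l * T))" 1] by simp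
      then have "cmod ?I \<le> cmod a * 2 / \<bar>l\<bar>"
        by (simp add: norm_mult norm_divide divide_right_mono mult_left_mono)
      then show ?thesis
        by (metis abs_Re_le_cmod mult.commute order_trans)
    qed
    finally show ?thesis
      using that by (simp add: divide_right_mono)
  qed
  have "\<forall>\<^sub>F T in at_top. norm (mean_value (\<lambda>t. Re (a * exp (\<i> * of_real (l * t)))) T) \<le> 2 * cmod a / \<bar>l\<bar> / T"
    using eventually_gt_at_top[of 0] by eventually_elim (simp only: real_norm_def bound)
  moreover have "((\<lambda>T. 2 * cmod a / \<bar>l\<bar> / T) \<longlongrightarrow> 0) at_top"
    by (intro tendsto_divide_0[OF tendsto_const] filterlim_at_top_imp_at_infinity filterlim_ident)
  ultimately show ?thesis
    using False by (simp add: Lim_null_comparison)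
qed

section \<open>Dirichlet polynomials\<close>

definition dirichlet_poly :: "(nat \<Rightarrow> complex) \<Rightarrow> nat set \<Rightarrow> real \<Rightarrow> complex" where
  "dirichlet_poly c S t = (\<Sum>m\<in>S. c m * exp (- \<i> * of_real (t * ln (real m))))"

lemma dirichlet_poly_it_eq: "dirichlet_poly_it a N = dirichlet_poly a {1..N}"
  by (simp add: fun_eq_iff dirichlet_poly_it_def dirichlet_poly_def)

lemma continuous_on_dirichlet_poly: "continuous_on A (dirichlet_poly c S)"
  unfolding dirichlet_poly_def by (intro continuous_intros)

lemma norm_dirichlet_poly_le: "norm (dirichlet_poly c S t) \<le> (\<Sum>m\<in>S. norm (c m))"
  unfolding dirichlet_poly_def
  by (rule order_trans[OF norm_sum]) (simp add: norm_mult norm_exp_eq_Re)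

lemma norm_dirichlet_poly_squared_le:
  "(norm (dirichlet_poly c S t))^2 \<le> real (card S) * (\<Sum>m\<in>S. (norm (c m))^2)"
proof -
  have "(norm (dirichlet_poly c S t))^2 \<le> (\<Sum>m\<in>S. norm (c m))^2"
    by (intro power_mono norm_dirichlet_poly_le) simp
  also have "\<dots> \<le> (\<Sum>m\<in>S. (norm (c m))^2) * real (card S)"
    by (rule sum_squared_le_sum_of_squares)
  finally show ?thesis
    by (simp add: mult.commute)
qed

lemma dirichlet_poly_mult:
  assumes "finite S" "finite T" "0 \<notin> S" "0 \<notin> T"
  shows "dirichlet_poly c S t * dirichlet_poly d T t =
    dirichlet_poly (\<lambda>m. \<Sum>x\<in>{x\<in>S \<times> T. fst x * snd x = m}. c (fst x) * d (snd x))
      ((\<lambda>x. fst x * snd x) ` (S \<times> T)) t"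
proof -
  define E where "E m = exp (- \<i> * of_real (t * ln (real m)))" for m :: nat
  define g where "g x = fst x * snd x" for x :: "nat \<times> nat"
  have E_mult: "E (fst x) * E (snd x) = E (g x)" if "x \<in> S \<times> T" for x
    using that assms by (auto simp: E_def g_def ln_mult exp_add[symmetric] algebra_simps)
  have "dirichlet_poly c S t * dirichlet_poly d T t = (\<Sum>x\<in>S \<times> T. c (fst x) * d (snd x) * E (g x))"
    unfolding dirichlet_poly_def E_def[symmetric] sum_product sum.cartesian_product
    by (intro sum.cong refl) (auto simp: E_mult[symmetric] algebra_simps)
  also have "\<dots> = (\<Sum>m\<in>g ` (S \<times> T). \<Sum>x\<in>{x\<in>S \<times> T. g x = m}. c (fst x) * d (snd x) * E (g x))"
    using assms by (intro sum.group[symmetric]) auto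
  also have "\<dots> = (\<Sum>m\<in>g ` (S \<times> T). (\<Sum>x\<in>{x\<in>S \<times> T. g x = m}. c (fst x) * d (snd x)) * E m)"
    unfolding sum_distrib_right by (intro sum.cong refl) auto
  finally show ?thesis
    unfolding dirichlet_poly_def E_def g_def .
qed

fun factor_products :: "nat \<Rightarrow> nat \<Rightarrow> nat set" where
  "factor_products N 0 = {1}"
| "factor_products N (Suc j) = (\<lambda>x. fst x * snd x) ` (factor_products N j \<times> {1..N})"

lemma finite_factor_products [simp]: "finite (factor_products N j)"
  by (induction j) auto

lemma factor_products_subset_smooth_numbers: "factor_products N j \<subseteq> smooth_numbers N (N ^ j)"
proof (induction j)
  case 0
  then show ?case
    by (auto simp: smooth_numbers_def dest: prime_gt_1_nat)
next
  case (Suc j)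
  show ?case
  proof
    fix m assume "m \<in> factor_products N (Suc j)"
    then obtain u v where m: "m = u * v" and u: "u \<in> smooth_numbers N (N ^ j)" and v: "v \<in> {1..N}"
      using Suc.IH by auto
    have "u * v \<le> N ^ j * N"
      using u v by (intro mult_le_mono) (auto simp: smooth_numbers_def)
    moreover have "p \<le> N" if "prime p" "p dvd u * v" for p
      using that u v dvd_imp_le[of p v] by (auto simp: smooth_numbers_def prime_dvd_mult_iff)
    ultimately show "m \<in> smooth_numbers N (N ^ Suc j)"
      using u v by (auto simp: smooth_numbers_def m mult.commute)
  qed
qed

lemma dirichlet_poly_power:
  "\<exists>b. \<forall>t. dirichlet_poly a {1..N} t ^ j = dirichlet_poly b (factor_products N j) t"
proof (induction j)
  case 0
  show ?case
    by (rule exI[of _ "\<lambda>_. 1"]) (simp add: dirichlet_poly_def)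
next
  case (Suc j)
  then obtain b where b: "\<And>t. dirichlet_poly a {1..N} t ^ j = dirichlet_poly b (factor_products N j) t"
    by blast
  have "0 \<notin> factor_products N j"
    using factor_products_subset_smooth_numbers[of N j] by (auto simp: smooth_numbers_def)
  have "dirichlet_poly a {1..N} t ^ Suc j = dirichlet_poly
      (\<lambda>m. \<Sum>x\<in>{x\<in>factor_products N j \<times> {1..N}. fst x * snd x = m}. b (fst x) * a (snd x))
      (factor_products N (Suc j)) t" for t
    unfolding power_Suc2 b factor_products.simps
    by (rule dirichlet_poly_mult) (use \<open>0 \<notin> factor_products N j\<close> in auto)
  then show ?case
    by blast
qed

lemma norm_dirichlet_poly_squared_eq:
  "(norm (dirichlet_poly c S t))^2
    = (\<Sum>m\<in>S. \<Sum>m'\<in>S. Re (c m * cnj (c m') * exp (\<i> * of_real ((ln (real m') - ln (real m)) * t))))"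
proof -
  have "complex_of_real ((norm (dirichlet_poly c S t))^2) = dirichlet_poly c S t * cnj (dirichlet_poly c S t)"
    by (rule complex_norm_square)
  also have "\<dots> = (\<Sum>m\<in>S. \<Sum>m'\<in>S. c m * cnj (c m') * exp (\<i> * of_real ((ln (real m') - ln (real m)) * t)))"
  proof -
    have "exp (- \<i> * of_real (t * ln (real m))) * cnj (exp (- \<i> * of_real (t * ln (real m'))))
        = exp (\<i> * of_real ((ln (real m') - ln (real m)) * t))" for m m'
    proof -
      have "- \<i> * of_real (t * ln (real m)) + cnj (- \<i> * of_real (t * ln (real m')))
          = \<i> * of_real ((ln (real m') - ln (real m)) * t)"
        by (simp add: algebra_simps)
      then show ?thesis
        by (simp only: exp_cnj mult_exp_exp)
    qed
    then show ?thesis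
      unfolding dirichlet_poly_def cnj_sum sum_product
      by (intro sum.cong refl) (simp add: ac_simps)
  qed
  finally show ?thesis
    by (subst (asm) complex_eq_iff) (simp only: Re_complex_of_real Re_sum)
qed

lemma tendsto_mean_value_norm_dirichlet_poly_squared:
  assumes "finite S" "0 \<notin> S"
  shows "(mean_value (\<lambda>t. (norm (dirichlet_poly c S t))^2) \<longlongrightarrow> (\<Sum>m\<in>S. (norm (c m))^2)) at_top"
proof -
  let ?f = "\<lambda>m m' t. Re (c m * cnj (c m') * exp (\<i> * of_real ((ln (real m') - ln (real m)) * t)))"
  have cont: "continuous_on UNIV (?f m m')" for m m'
    by (intro continuous_intros)
  have "(mean_value (\<lambda>t. \<Sum>m\<in>S. \<Sum>m'\<in>S. ?f m m' t) \<longlongrightarrow>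
      (\<Sum>m\<in>S. \<Sum>m'\<in>S. if ln (real m') - ln (real m) = 0 then Re (c m * cnj (c m')) else 0)) at_top"
    by (intro tendsto_mean_value_sum assms(1) continuous_on_sum cont tendsto_mean_value_Re_exp_i)
  also have "(\<Sum>m\<in>S. \<Sum>m'\<in>S. if ln (real m') - ln (real m) = 0 then Re (c m * cnj (c m')) else 0)
      = (\<Sum>m\<in>S. (norm (c m))^2)"
  proof (intro sum.cong refl)
    fix m assume "m \<in> S"
    have "ln (real m') - ln (real m) = 0 \<longleftrightarrow> m' = m" if "m' \<in> S" for m'
    proof -
      have "m > 0" "m' > 0"
        using that \<open>m \<in> S\<close> assms(2) by (auto intro: gr0I)
      then show ?thesis
        by simp
    qed
    then have "(\<Sum>m'\<in>S. if ln (real m') - ln (real m) = 0 then Re (c m * cnj (c m')) else 0)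
        = (\<Sum>m'\<in>S. if m' = m then Re (c m * cnj (c m')) else 0)"
      by (intro sum.cong refl) auto
    also have "\<dots> = Re (c m * cnj (c m))"
      using assms(1) \<open>m \<in> S\<close> by (simp add: sum.delta)
    also have "\<dots> = (norm (c m))^2"
      by (metis Re_complex_of_real complex_norm_square)
    finally show "(\<Sum>m'\<in>S. if ln (real m') - ln (real m) = 0 then Re (c m * cnj (c m')) else 0)
        = (norm (c m))^2" .
  qed
  finally show ?thesis
    by (simp only: norm_dirichlet_poly_squared_eq)
qed

lemma tendsto_mean_value_norm_dirichlet_poly_power:
  obtains b where "\<And>t. dirichlet_poly a {1..N} t ^ j = dirichlet_poly b (factor_products N j) t"
    and "(mean_value (\<lambda>t. norm (dirichlet_poly a {1..N} t) ^ (2*j))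
          \<longlongrightarrow> (\<Sum>m\<in>factor_products N j. (norm (b m))^2)) at_top"
proof -
  obtain b where b: "\<And>t. dirichlet_poly a {1..N} t ^ j = dirichlet_poly b (factor_products N j) t"
    using dirichlet_poly_power by blast
  have "0 \<notin> factor_products N j"
    using factor_products_subset_smooth_numbers[of N j] by (auto simp: smooth_numbers_def)
  then have "(mean_value (\<lambda>t. (norm (dirichlet_poly b (factor_products N j) t))^2)
      \<longlongrightarrow> (\<Sum>m\<in>factor_products N j. (norm (b m))^2)) at_top"
    by (intro tendsto_mean_value_norm_dirichlet_poly_squared) simp_all
  moreover have "norm (dirichlet_poly a {1..N} t) ^ (2*j) = (norm (dirichlet_poly b (factor_products N j) t))^2" for t
    by (simp add: b[symmetric] norm_power power_mult[symmetric] mult.commute)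
  ultimately show ?thesis
    using that b by simp
qed

lemma power2_powr_half:
  fixes x r :: real
  shows "(x^2) powr (r / 2) = \<bar>x\<bar> powr r"
proof -
  have "x^2 = \<bar>x\<bar> powr 2"
    by simp
  then have "(x^2) powr (r / 2) = \<bar>x\<bar> powr (2 * (r / 2))"
    by (simp only: powr_powr)
  then show ?thesis
    by simp
qed

lemma convergent_mean_value_polynomial_norm_squared_dirichlet_poly:
  assumes "real_polynomial_function g"
  shows "\<exists>L. (mean_value (\<lambda>t. g ((norm (dirichlet_poly a {1..N} t))^2)) \<longlongrightarrow> L) at_top"
proof -
  define f where "f = dirichlet_poly a {1..N}"
  obtain c n where g: "g = (\<lambda>x. \<Sum>i\<le>n. c i * x^i)"
    using real_polynomial_function_imp_sum[OF assms] by blast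
  have "\<forall>i. \<exists>L. (mean_value (\<lambda>t. norm (f t) ^ (2*i)) \<longlongrightarrow> L) at_top"
    unfolding f_def by (metis tendsto_mean_value_norm_dirichlet_poly_power)
  then obtain L where L: "\<And>i. (mean_value (\<lambda>t. norm (f t) ^ (2*i)) \<longlongrightarrow> L i) at_top"
    by metis
  have "(mean_value (\<lambda>t. c i * norm (f t) ^ (2*i)) \<longlongrightarrow> c i * L i) at_top" for i
    unfolding mean_value_cmult by (rule tendsto_mult_left[OF L])
  then have "(mean_value (\<lambda>t. \<Sum>i\<le>n. c i * norm (f t) ^ (2*i)) \<longlongrightarrow> (\<Sum>i\<le>n. c i * L i)) at_top"
    by (intro tendsto_mean_value_sum)
       (auto simp: f_def intro!: continuous_intros continuous_on_dirichlet_poly)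
  then show ?thesis
    by (auto simp: g f_def power_mult)
qed

lemma convergent_mean_value_norm_dirichlet_poly_powr:
  assumes "q > 0"
  shows "\<exists>L. (mean_value (\<lambda>t. norm (dirichlet_poly a {1..N} t) powr q) \<longlongrightarrow> L) at_top"
proof (rule convergent_mean_value_of_uniform_approximation)
  define f where "f = dirichlet_poly a {1..N}"
  define R where "R = (\<Sum>n\<in>{1..N}. norm (a n))"
  have f: "continuous_on UNIV f" "\<And>t. norm (f t) \<le> R"
    unfolding f_def R_def by (simp_all add: continuous_on_dirichlet_poly norm_dirichlet_poly_le)
  show "continuous_on UNIV (\<lambda>t. norm (dirichlet_poly a {1..N} t) powr q)"
    using f(1) assms by (intro continuous_on_powr') (auto simp: f_def intro: continuous_on_norm)
  fix e :: real assume "e > 0"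
  have "continuous_on {0..R^2} (\<lambda>x::real. x powr (q / 2))"
    using assms by (intro continuous_on_powr') auto
  then obtain g where g: "real_polynomial_function g" "\<And>x. x \<in> {0..R^2} \<Longrightarrow> \<bar>x powr (q / 2) - g x\<bar> < e"
    using Stone_Weierstrass_real_polynomial_function[OF compact_Icc _ \<open>e > 0\<close>] by blast
  have "\<bar>norm (f t) powr q - g ((norm (f t))^2)\<bar> \<le> e" for t
  proof -
    have "(norm (f t))^2 \<in> {0..R^2}"
      using f(2)[of t] by (auto intro: power_mono)
    from g(2)[OF this] show ?thesis
      by (simp add: power2_powr_half less_imp_le)
  qed
  moreover have "continuous_on UNIV (\<lambda>t. g ((norm (f t))^2))"
    by (rule continuous_on_compose2[OF continuous_on_polymonial_function])
       (use g(1) in \<open>auto intro!: continuous_intros f(1) simp: real_polynomial_function_eq\<close>)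
  ultimately show "\<exists>g L. continuous_on UNIV g \<and> (mean_value g \<longlongrightarrow> L) at_top \<and>
      (\<forall>t\<ge>0. \<bar>norm (dirichlet_poly a {1..N} t) powr q - g t\<bar> \<le> e)"
    using convergent_mean_value_polynomial_norm_squared_dirichlet_poly[OF g(1), of a N]
    unfolding f_def by blast
qed

lemma power_powr_inverse:
  fixes x :: real
  assumes "x \<ge> 0" "n > 0"
  shows "(x ^ n) powr (1 / real n) = x"
proof -
  have "x ^ n = x powr real n"
    using assms by (simp add: powr_realpow')
  then show ?thesis
    using assms by (simp add: powr_powr)
qed

lemma dp_norm_eq_limit_powr:
  assumes "(mean_value (\<lambda>t. norm (dirichlet_poly_it a N t) powr q) \<longlongrightarrow> L) at_top"
  shows "dp_norm q a N = L powr (1 / q)"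
  using assms unfolding dp_norm_def mean_value_def by (simp add: tendsto_Lim)

lemma norm_dirichlet_poly_power_le_moment:
  assumes "N \<ge> 2" "prime_pi N \<le> j"
    and "(mean_value (\<lambda>t. norm (dirichlet_poly a {1..N} t) ^ (2*j)) \<longlongrightarrow> M) at_top"
  shows "norm (dirichlet_poly a {1..N} t) ^ (2*j) \<le> exp (259 * real j) * M"
proof -
  obtain b where b: "\<And>t. dirichlet_poly a {1..N} t ^ j = dirichlet_poly b (factor_products N j) t"
    and lim: "(mean_value (\<lambda>t. norm (dirichlet_poly a {1..N} t) ^ (2*j))
          \<longlongrightarrow> (\<Sum>m\<in>factor_products N j. (norm (b m))^2)) at_top"
    using tendsto_mean_value_norm_dirichlet_poly_power[where a = a and N = N and j = j] by blast
  have M: "M = (\<Sum>m\<in>factor_products N j. (norm (b m))^2)"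
    using tendsto_unique[OF trivial_limit_at_top_linorder assms(3) lim] .
  have "card (factor_products N j) \<le> card (smooth_numbers N (N ^ j))"
    by (simp add: card_mono factor_products_subset_smooth_numbers)
  then have "real (card (factor_products N j)) \<le> exp (259 * real j)"
    using card_smooth_numbers_le_exp[OF assms(1,2)] by linarith
  moreover have "norm (dirichlet_poly a {1..N} t) ^ (2*j) = (norm (dirichlet_poly b (factor_products N j) t))^2"
    by (simp add: b[symmetric] norm_power power_mult[symmetric] mult.commute)
  moreover have "\<dots> \<le> real (card (factor_products N j)) * M"
    unfolding M by (rule norm_dirichlet_poly_squared_le)
  moreover have "M \<ge> 0"
    unfolding M by (intro sum_nonneg) simp
  ultimately show ?thesis
    by (metis mult_right_mono order_trans)
qed

lemma tendsto_mean_value_norm_power_le_powr: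
  fixes f :: "real \<Rightarrow> 'a::real_normed_vector"
  assumes "continuous_on UNIV f" "j > 0" "real j \<le> k"
    and M: "(mean_value (\<lambda>t. norm (f t) ^ (2*j)) \<longlongrightarrow> M) at_top"
    and L: "(mean_value (\<lambda>t. norm (f t) powr (2 * k)) \<longlongrightarrow> L) at_top"
  shows "M \<le> L powr (real j / k)"
proof -
  have "(norm (f t) powr (2 * k)) powr (real j / k) = norm (f t) powr real (2 * j)" for t
    using assms(2,3) by (simp add: powr_powr)
  also have "norm (f t) powr real (2 * j) = norm (f t) ^ (2 * j)" for t
    using assms(2) by (intro powr_realpow') auto
  finally have "norm (f t) ^ (2 * j) = (norm (f t) powr (2 * k)) powr (real j / k)" for t
    by simp
  moreover have "continuous_on UNIV (\<lambda>t. norm (f t) powr (2 * k))"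
    using assms(1-3) by (intro continuous_on_powr' continuous_on_norm) auto
  ultimately show ?thesis
    using assms(2,3) M L by (intro tendsto_mean_value_powr_le) auto
qed

lemma dp_sup_norm_le:
  assumes N: "N \<ge> 2" and k: "k \<ge> real (prime_pi N)"
  shows "dp_sup_norm a N \<le> exp (259 / 2) * dp_norm (2 * k) a N"
proof -
  define f where "f = dirichlet_poly a {1..N}"
  define j where "j = nat \<lfloor>k\<rfloor>"
  have j: "prime_pi N \<le> j" "j > 0" "real j \<le> k" "k > 0"
    using k prime_pi_pos[OF N] by (auto simp: j_def le_nat_floor le_floor_iff)
  obtain L where L: "(mean_value (\<lambda>t. norm (f t) powr (2 * k)) \<longlongrightarrow> L) at_top"
    using convergent_mean_value_norm_dirichlet_poly_powr[of "2 * k"] j by (auto simp: f_def)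
  obtain M where M: "(mean_value (\<lambda>t. norm (f t) ^ (2*j)) \<longlongrightarrow> M) at_top"
    unfolding f_def by (metis tendsto_mean_value_norm_dirichlet_poly_power)
  have "M \<le> L powr (real j / k)"
    using L M j by (intro tendsto_mean_value_norm_power_le_powr) (auto simp: f_def continuous_on_dirichlet_poly)
  have "norm (f t) \<le> exp (259 / 2) * L powr (1 / (2 * k))" for t
  proof -
    have "norm (f t) ^ (2*j) \<le> exp (259 * real j) * M"
      unfolding f_def by (rule norm_dirichlet_poly_power_le_moment[OF N j(1) M[unfolded f_def]])
    also have "\<dots> \<le> exp (259 * real j) * L powr (real j / k)"
      using \<open>M \<le> _\<close> by simp
    finally have "(norm (f t) ^ (2*j)) powr (1 / real (2*j))
        \<le> (exp (259 * real j) * L powr (real j / k)) powr (1 / real (2*j))"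
      by (intro powr_mono2) auto
    also have "\<dots> = exp (259 * real j) powr (1 / real (2*j)) * (L powr (real j / k)) powr (1 / real (2*j))"
      by (simp add: powr_mult)
    also have "\<dots> = exp (259 / 2) * L powr (1 / (2 * k))"
      using j by (simp add: powr_powr powr_def)
    finally show ?thesis
      using power_powr_inverse[of "norm (f t)" "2 * j"] j by simp
  qed
  then show ?thesis
    using L unfolding dp_sup_norm_def f_def dirichlet_poly_it_eq[symmetric]
    by (simp add: dp_norm_eq_limit_powr cSUP_least)
qed

theorem corollary1:
  shows "\<exists>c::real. c > 0 \<and> (\<exists>C::real. C > 0 \<and>
           (\<forall>(N::nat) (a::nat \<Rightarrow> complex) (k::real).
              N \<ge> 2 \<longrightarrow>
              (k \<ge> c * real N / ln (real N) \<or> k \<ge> real (prime_pi N)) \<longrightarrow>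
              dp_sup_norm a N \<le> C * dp_norm (2 * k) a N))"
proof (intro exI conjI allI impI)
  show "(8::real) > 0" "exp (259 / 2) > (0::real)"
    by simp_all
  fix N :: nat and a :: "nat \<Rightarrow> complex" and k :: real
  assume N: "N \<ge> 2" and "k \<ge> 8 * real N / ln (real N) \<or> k \<ge> real (prime_pi N)"
  then have "k \<ge> real (prime_pi N)"
    using prime_pi_upper[OF N] by linarith
  then show "dp_sup_norm a N \<le> exp (259 / 2) * dp_norm (2 * k) a N"
    by (rule dp_sup_norm_le[OF N])
qed

end
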